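(* Let $A$ be a guidable nondeterministic parity tree automaton over $\Sigma$ and $J$ an index with $\min(J)\in\{1,2\}$. Suppose $\mathcal{L}(A)$ is $J$-feasible, witnessed by a $J$-parity tree automaton $B$ with $\mathcal{L}(B)=\mathcal{L}(A)$, and let $N=|A|\,|B|+1$ where $|A|,|B|$ are the numbers of states. Then for every $\Sigma$-tree $t\in\mathcal{L}(A)$, every accepting run $\rho_B$ of $B$ on $t$, and $\rho_A=g(\rho_B)$ the run of $A$ on $t$ guided by $\rho_B$ via an acceptance-preserving guiding function $g$ from $B$ to $A$, Eve wins $\mathrm{Reg}^J_N(\rho_A)$, where $\rho_A$ is viewed as a parity graph.
   Context: An index is a nonempty finite interval of $\mathbb{N}$; a priority sequence is parity accepting if its $\limsup$ is even. A nondeterministic $I$-parity tree automaton is $(\Sigma,Q,q_I,\Delta,\Omega)$, $Q$ finite, $\Delta\subseteq Q\times\Sigma\times Q\times Q$ complete, $\Omega:\Delta\to I^2$. A run on $t:\{0,1\}^*\to\Sigma$ is $\rho:\{0,1\}^*\to\Delta$ with $\rho(\varepsilon)$ from $q_I$, $\rho(u)=(q,t(u),q_0,q_1)$, $\rho(u\cdot d)$ from $q_d$; the edge $u\to u\cdot d$ has priority the $d$-th component of $\Omega(\rho(u))$; accepting means every branch has parity accepting priority sequence. $\mathcal{L}(A)$ = trees with an accepting run; a language is $J$-feasible if recognised by some $J$-parity automaton. A guiding function from $B$ to $A$ is $g:Q_A\times\Delta_B\to\Delta_A$ with $g(p,(q,a,q_0,q_1))=(p,a,p_0,p_1)$; $g(\rho)(u)=g(s(u),\rho(u))=(s(u),t(u),p_0,p_1)$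 with $s(\varepsilon)=q_{I,A}$, $s(u\cdot d)=p_d$; it preserves acceptance if $g(\rho)$ is accepting whenever $\rho$ is. $A$ is guidable if every $B$ with $\mathcal{L}(B)=\mathcal{L}(A)$ admits an acceptance-preserving guiding function to $A$. A run $\rho$ is viewed as the parity graph with vertices $\{0,1\}^*$, edges $u\to u\cdot d$ labelled by their priorities, started at $\varepsilon$. Priority transduction game $\mathrm{Reg}^J_N(G)$ over a parity graph $G=(V,E,L)$ with priorities in $I$: configurations consist of a vertex, registers $r_j\in I$ for each $j$ with $2j\in J$ (plus $r_0$ if $1\in J$), counters $c_{i,j}\in\mathbb{N}$ for odd $i\in I$ and register indices $j$; initially counters $0$, registers $\min(I)$. Each step: (a) Adam chooses an outgoing edge $e$; (b) Eve chooses a register $r_j$; (c) output $w=1$ if $j=0$; else $w=2j$ if $r_j$ even; else if $c_{r_j,j}=N$ then $w=2j+1$, $c_{r_j,j}:=0$, and Eve loses immediately if $2j+1\notin J$; else $w=2j$, $c_{r_j,j}:=c_{r_j,j}+1$; (d) if $L(e)$ even, $i:=L(e)$, else Eve chooses odd $i\ge L(e)$ in $I$; then $c_{i',j}:=0$ for $i'<i$, $c_{r_j,j'}:=0$ for $j'<j$, $r_{j'}:=\max(i,r_{j'})$ for $j'>j$, $r_j:=i$. Eve wins iff she never loses immediately and the output sequence is parity accepting. *)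

theory Defs
  imports Main "HOL-Library.Extended_Nat" "HOL-Library.Liminf_Limsup"
begin

text \<open>Tree nodes are bool lists (False = direction 0, True = direction 1);
  the child u.d of u is u @ [d]. States of all automata are natural numbers
  (every finite state set is isomorphic to a finite set of naturals).
  A transition is (q, a, q0, q1).\<close>

type_synonym 'a trans = "nat \<times> 'a \<times> nat \<times> nat"

record 'a aut =
  states :: "nat set"
  init :: nat
  delta :: "'a trans set"
  pri :: "'a trans \<Rightarrow> nat \<times> nat"

definition index :: "nat set \<Rightarrow> bool" where
  "index I \<longleftrightarrow> (\<exists>a b. a \<le> b \<and> I = {a..b})"

definition parity_acc :: "(nat \<Rightarrow> nat) \<Rightarrow> bool" where
  "parity_acc w \<longleftrightarrow> (\<exists>m. even m \<and> limsup (\<lambda>n. enat (w n)) = enat m)"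

definition is_aut :: "'a set \<Rightarrow> nat set \<Rightarrow> 'a aut \<Rightarrow> bool" where
  "is_aut \<Sigma> I A \<longleftrightarrow> index I \<and> finite (states A) \<and> init A \<in> states A
     \<and> delta A \<subseteq> states A \<times> \<Sigma> \<times> states A \<times> states A
     \<and> (\<forall>q\<in>states A. \<forall>a\<in>\<Sigma>. \<exists>q0 q1. (q, a, q0, q1) \<in> delta A)
     \<and> (\<forall>\<tau>\<in>delta A. fst (pri A \<tau>) \<in> I \<and> snd (pri A \<tau>) \<in> I)"

definition is_tree :: "'a set \<Rightarrow> (bool list \<Rightarrow> 'a) \<Rightarrow> bool" where
  "is_tree \<Sigma> t \<longleftrightarrow> (\<forall>u. t u \<in> \<Sigma>)"

definition child_state :: "bool \<Rightarrow> 'a trans \<Rightarrow> nat" where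
  "child_state d \<tau> = (case \<tau> of (q, a, q0, q1) \<Rightarrow> if d then q1 else q0)"

definition edge_pri :: "'a aut \<Rightarrow> 'a trans \<Rightarrow> bool \<Rightarrow> nat" where
  "edge_pri A \<tau> d = (if d then snd (pri A \<tau>) else fst (pri A \<tau>))"

definition is_run :: "'a aut \<Rightarrow> (bool list \<Rightarrow> 'a) \<Rightarrow> (bool list \<Rightarrow> 'a trans) \<Rightarrow> bool" where
  "is_run A t \<rho> \<longleftrightarrow> fst (\<rho> []) = init A \<and>
     (\<forall>u. \<rho> u \<in> delta A \<and> fst (snd (\<rho> u)) = t u \<and>
          (\<forall>d. fst (\<rho> (u @ [d])) = child_state d (\<rho> u)))"

definition accepting_run :: "'a aut \<Rightarrow> (bool list \<Rightarrow> 'a) \<Rightarrow> (bool list \<Rightarrow> 'a trans) \<Rightarrow> bool" where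
  "accepting_run A t \<rho> \<longleftrightarrow> is_run A t \<rho> \<and>
     (\<forall>\<beta> :: nat \<Rightarrow> bool. parity_acc (\<lambda>n. edge_pri A (\<rho> (map \<beta> [0..<n])) (\<beta> n)))"

definition lang :: "'a set \<Rightarrow> 'a aut \<Rightarrow> (bool list \<Rightarrow> 'a) set" where
  "lang \<Sigma> A = {t. is_tree \<Sigma> t \<and> (\<exists>\<rho>. accepting_run A t \<rho>)}"

definition is_guiding_fn :: "'a aut \<Rightarrow> 'a aut \<Rightarrow> (nat \<Rightarrow> 'a trans \<Rightarrow> 'a trans) \<Rightarrow> bool" where
  "is_guiding_fn A B g \<longleftrightarrow> (\<forall>p\<in>states A. \<forall>\<tau>\<in>delta B.
      g p \<tau> \<in> delta A \<and> fst (g p \<tau>) = p \<and> fst (snd (g p \<tau>)) = fst (snd \<tau>))"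

text \<open>State s(u) of the guided run, computed on the reversed node u.\<close>
fun guided_state_rev :: "(nat \<Rightarrow> 'a trans \<Rightarrow> 'a trans) \<Rightarrow> nat \<Rightarrow> (bool list \<Rightarrow> 'a trans)
    \<Rightarrow> bool list \<Rightarrow> nat" where
  "guided_state_rev g q0 \<rho> [] = q0"
| "guided_state_rev g q0 \<rho> (d # ru) =
     child_state d (g (guided_state_rev g q0 \<rho> ru) (\<rho> (rev ru)))"

definition guided_run :: "'a aut \<Rightarrow> (nat \<Rightarrow> 'a trans \<Rightarrow> 'a trans) \<Rightarrow> (bool list \<Rightarrow> 'a trans)
    \<Rightarrow> bool list \<Rightarrow> 'a trans" where
  "guided_run A g \<rho> u = g (guided_state_rev g (init A) \<rho> (rev u)) (\<rho> u)"

definition preserves_acc :: "'a set \<Rightarrow> 'a aut \<Rightarrow> 'a aut \<Rightarrow> (nat \<Rightarrow> 'a trans \<Rightarrow> 'a trans) \<Rightarrow> bool" where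
  "preserves_acc \<Sigma> A B g \<longleftrightarrow> (\<forall>t \<rho>. is_tree \<Sigma> t \<longrightarrow> accepting_run B t \<rho> \<longrightarrow>
      accepting_run A t (guided_run A g \<rho>))"

definition guidable :: "'a set \<Rightarrow> 'a aut \<Rightarrow> bool" where
  "guidable \<Sigma> A \<longleftrightarrow> (\<forall>B J. is_aut \<Sigma> J B \<longrightarrow> lang \<Sigma> B = lang \<Sigma> A \<longrightarrow>
      (\<exists>g. is_guiding_fn A B g \<and> preserves_acc \<Sigma> A B g))"

text \<open>Parity graphs: a set of labelled edges (source, priority, target) and an initial vertex.
  A run is viewed as the parity graph on nodes with edges u \<rightarrow> u.d.\<close>
definition run_graph :: "'a aut \<Rightarrow> (bool list \<Rightarrow> 'a trans)
    \<Rightarrow> (bool list \<times> nat \<times> bool list) set \<times> bool list" where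
  "run_graph A \<rho> = ({(u, edge_pri A (\<rho> u) d, u @ [d]) | u d. True}, [])"

definition is_play :: "('v \<times> nat \<times> 'v) set \<Rightarrow> 'v \<Rightarrow> (nat \<Rightarrow> 'v \<times> nat \<times> 'v) \<Rightarrow> bool" where
  "is_play E v0 e \<longleftrightarrow> (\<forall>n. e n \<in> E) \<and> fst (e 0) = v0 \<and>
     (\<forall>n. fst (e (Suc n)) = snd (snd (e n)))"

definition reg_indices :: "nat set \<Rightarrow> nat set" where
  "reg_indices J = {j. 2 * j \<in> J \<or> (j = 0 \<and> 1 \<in> J)}"

text \<open>Step (c): output w, whether Eve loses immediately, updated counters.\<close>
definition reg_output :: "nat set \<Rightarrow> nat \<Rightarrow> (nat \<Rightarrow> nat) \<Rightarrow> (nat \<times> nat \<Rightarrow> nat) \<Rightarrow> nat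
    \<Rightarrow> nat \<times> bool \<times> (nat \<times> nat \<Rightarrow> nat)" where
  "reg_output J N r c j =
    (if j = 0 then (1, False, c)
     else if even (r j) then (2 * j, False, c)
     else if c (r j, j) = N then (2 * j + 1, 2 * j + 1 \<notin> J, c((r j, j) := 0))
     else (2 * j, False, c((r j, j) := Suc (c (r j, j)))))"

text \<open>Step (d) with the priority i already determined.\<close>
definition reg_update :: "nat \<Rightarrow> nat \<Rightarrow> (nat \<Rightarrow> nat) \<Rightarrow> (nat \<times> nat \<Rightarrow> nat)
    \<Rightarrow> (nat \<Rightarrow> nat) \<times> (nat \<times> nat \<Rightarrow> nat)" where
  "reg_update j i r c =
    ((\<lambda>j'. if j' = j then i else if j < j' then max i (r j') else r j'),
     (\<lambda>(i', j'). if (j' = j \<and> i' < i) \<or> (i' = r j \<and> j' < j) then 0 else c (i', j')))"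

definition chosen_prio :: "nat \<Rightarrow> nat \<Rightarrow> nat" where
  "chosen_prio L ic = (if even L then L else ic)"

text \<open>Configuration (registers, counters) before step n, given Adam's edges e and
  Eve's choices ch n = (register index, odd priority chosen if needed).\<close>
fun reg_conf :: "nat set \<Rightarrow> nat set \<Rightarrow> nat \<Rightarrow> (nat \<Rightarrow> 'v \<times> nat \<times> 'v) \<Rightarrow> (nat \<Rightarrow> nat \<times> nat)
    \<Rightarrow> nat \<Rightarrow> (nat \<Rightarrow> nat) \<times> (nat \<times> nat \<Rightarrow> nat)" where
  "reg_conf I J N e ch 0 = ((\<lambda>_. Min I), (\<lambda>_. 0))"
| "reg_conf I J N e ch (Suc n) =
     (let (r, c) = reg_conf I J N e ch n;
          (w, l, c1) = reg_output J N r c (fst (ch n))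
      in reg_update (fst (ch n)) (chosen_prio (fst (snd (e n))) (snd (ch n))) r c1)"

definition reg_out :: "nat set \<Rightarrow> nat set \<Rightarrow> nat \<Rightarrow> (nat \<Rightarrow> 'v \<times> nat \<times> 'v) \<Rightarrow> (nat \<Rightarrow> nat \<times> nat)
    \<Rightarrow> nat \<Rightarrow> nat \<times> bool" where
  "reg_out I J N e ch n =
     (let (r, c) = reg_conf I J N e ch n; (w, l, c1) = reg_output J N r c (fst (ch n)) in (w, l))"

definition legal_choice :: "nat set \<Rightarrow> nat set \<Rightarrow> nat \<Rightarrow> nat \<times> nat \<Rightarrow> bool" where
  "legal_choice I J L ch \<longleftrightarrow> fst ch \<in> reg_indices J \<and>
     (odd L \<longrightarrow> odd (snd ch) \<and> L \<le> snd ch \<and> snd ch \<in> I)"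

text \<open>Eve wins Reg^J_N(G): she has a strategy (seeing the history of Adam's edges,
  including the current one) such that on every play her moves are legal, she never
  loses immediately and the output sequence is parity accepting.\<close>
definition eve_wins_reg :: "nat set \<Rightarrow> nat set \<Rightarrow> nat \<Rightarrow> ('v \<times> nat \<times> 'v) set \<times> 'v \<Rightarrow> bool" where
  "eve_wins_reg I J N G \<longleftrightarrow>
     (\<exists>\<sigma> :: ('v \<times> nat \<times> 'v) list \<Rightarrow> nat \<times> nat. \<forall>e. is_play (fst G) (snd G) e \<longrightarrow>
        (let ch = (\<lambda>n. \<sigma> (map e [0..<Suc n])) in
          (\<forall>n. legal_choice I J (fst (snd (e n))) (ch n) \<and> \<not> snd (reg_out I J N e ch n)) \<and>
          parity_acc (\<lambda>n. fst (reg_out I J N e ch n))))"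

end

theory Submission
  imports Defs
begin

text \<open>
  At each edge of the guided run Eve uses the register \<open>p div 2\<close>, where \<open>p\<close> is the priority of the
  guiding run, and moves to a higher register when an even priority of the guided run exceeds its
  content. The key fact is a pumping argument: if two nodes of a branch carry the same pair of
  states of \<open>A\<close> and \<open>B\<close> and the priorities of the guiding run between them peak at an even value,
  then looping the tree between the two nodes yields another accepting run of \<open>B\<close>; as the guiding
  function preserves acceptance, the maximal priority of the guided run between the two nodes is
  even. The increments of a counter \<open>(i, j)\<close> since its last reset happen at positions where the
  guiding run has priority \<open>2 j\<close> and between any two of which the guided run sees an odd maximum,
  so by the pigeonhole principle there are at most \<open>|A| |B|\<close> of them and Eve never loses. If \<open>2 k\<close>
  is the limsup of the guiding run, the registers above \<open>k\<close> are eventually no longer used and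
  register \<open>k\<close> overflows only finitely often, so the output has limsup \<open>2 k\<close> as well.
\<close>

section \<open>Limits of sequences of natural numbers\<close>

definition limsup_is :: "(nat \<Rightarrow> nat) \<Rightarrow> nat \<Rightarrow> bool" where
  "limsup_is s M \<longleftrightarrow> (\<forall>\<^sub>F n in sequentially. s n \<le> M) \<and> (\<exists>\<^sub>F n in sequentially. s n = M)"

lemma limsup_is_imp_limsup:
  assumes "limsup_is s M"
  shows "limsup (\<lambda>n. enat (s n)) = enat M"
proof (rule antisym)
  have "\<forall>\<^sub>F n in sequentially. enat (s n) \<le> enat M"
    using assms unfolding limsup_is_def by (auto elim: eventually_mono)
  then show "limsup (\<lambda>n. enat (s n)) \<le> enat M" by (rule Limsup_bounded)
next
  show "enat M \<le> limsup (\<lambda>n. enat (s n))"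
  proof (rule Limsup_greatest)
    fix P assume "eventually P sequentially"
    moreover have "\<exists>\<^sub>F n in sequentially. s n = M" using assms unfolding limsup_is_def by simp
    ultimately obtain n where "P n" "s n = M"
      using frequently_ex[OF frequently_eventually_conj] by blast
    then show "enat M \<le> (SUP n\<in>Collect P. enat (s n))" by (metis SUP_upper mem_Collect_eq)
  qed
qed

lemma parity_acc_iff_even: "limsup_is s M \<Longrightarrow> parity_acc s \<longleftrightarrow> even M"
  unfolding parity_acc_def by (simp add: limsup_is_imp_limsup)

lemma limsup_is_exists:
  assumes bounded: "\<And>n. s n \<le> B"
  shows "\<exists>M. limsup_is s M"
proof -
  define V where "V = {v. \<exists>\<^sub>F n in sequentially. s n = v}"
  have "\<forall>\<^sub>F n in sequentially. \<forall>v\<in>{..B} - V. s n \<noteq> v"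
    by (rule eventually_ball_finite) (auto simp: V_def not_frequently)
  then have in_V: "\<forall>\<^sub>F n in sequentially. s n \<in> V"
    by (rule eventually_mono) (use bounded in auto)
  then obtain n where "s n \<in> V" using eventually_happens'[OF _ in_V] by auto
  then have "V \<noteq> {}" by blast
  moreover have "finite V"
    by (rule finite_subset[of _ "{..B}"]) (auto simp: V_def bounded dest: frequently_ex)
  ultimately have "Max V \<in> V" and "\<forall>\<^sub>F n in sequentially. s n \<le> Max V"
    using in_V by (auto elim!: eventually_mono)
  then have "limsup_is s (Max V)" unfolding limsup_is_def by (simp add: V_def)
  then show ?thesis ..
qed

lemma limsup_is_shift: "limsup_is (\<lambda>n. s (n + k)) M \<longleftrightarrow> limsup_is s M"
  unfolding limsup_is_def frequently_def
  using eventually_sequentially_seg[of "\<lambda>n. s n \<le> M" k]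
    eventually_sequentially_seg[of "\<lambda>n. s n \<noteq> M" k] by simp

lemma limsup_is_cong:
  assumes "\<forall>\<^sub>F n in sequentially. s n = s' n"
  shows "limsup_is s M \<longleftrightarrow> limsup_is s' M"
proof -
  have "(\<forall>\<^sub>F n in sequentially. s n \<le> M) \<longleftrightarrow> (\<forall>\<^sub>F n in sequentially. s' n \<le> M)"
    using assms by (rule eventually_cong) simp
  moreover have "(\<exists>\<^sub>F n in sequentially. s n = M) \<longleftrightarrow> (\<exists>\<^sub>F n in sequentially. s' n = M)"
    using assms by (rule frequently_cong) simp
  ultimately show ?thesis unfolding limsup_is_def by simp
qed

lemma parity_acc_eventually_shift:
  assumes "\<forall>\<^sub>F n in sequentially. s (n + k) = s' n" and bounded: "\<And>n. s' n \<le> B"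
  shows "parity_acc s \<longleftrightarrow> parity_acc s'"
proof -
  obtain M where M: "limsup_is s' M" using limsup_is_exists bounded by blast
  then have "limsup_is s M"
    using limsup_is_cong[OF assms(1)] limsup_is_shift[of s k M] by simp
  then show ?thesis using M parity_acc_iff_even by simp
qed

lemma limsup_is_periodic:
  assumes "0 < P" and periodic: "\<And>n. a \<le> n \<Longrightarrow> s (n + P) = s n"
  shows "limsup_is s (Max (s ` {a..<a + P}))"
proof -
  define s' where "s' n = s (n + a)" for n
  have s'_add: "s' (n + k * P) = s' n" for n k
  proof (induction k)
    case (Suc k)
    have "s' (n + Suc k * P) = s ((n + k * P + a) + P)" by (simp add: s'_def algebra_simps)
    also have "\<dots> = s' (n + k * P)" unfolding s'_def by (rule periodic) simp
    finally show ?case using Suc by simp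
  qed simp
  have s'_mod: "s' n = s' (n mod P)" for n
    using s'_add[of "n mod P" "n div P"] by simp
  have range: "s' ` {0..<P} = s ` {a..<a + P}"
  proof -
    have "s' ` {0..<P} = s ` (\<lambda>n. n + a) ` {0..<P}" unfolding s'_def by (simp only: image_image)
    then show ?thesis by (simp add: add.commute)
  qed
  define M where "M = Max (s' ` {0..<P})"
  have "M \<in> s' ` {0..<P}" unfolding M_def using \<open>0 < P\<close> by (intro Max_in) auto
  then obtain q where q: "q < P" "s' q = M" by auto
  have "\<forall>\<^sub>F n in sequentially. s' n \<le> M"
  proof (intro always_eventually allI)
    fix n
    have "n mod P \<in> {0..<P}" using \<open>0 < P\<close> by simp
    then show "s' n \<le> M" unfolding s'_mod[of n] M_def by simp
  qed
  moreover have "\<exists>\<^sub>F n in sequentially. s' n = M"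
    unfolding frequently_sequentially
  proof
    fix m
    have "m \<le> q + m * P" using \<open>0 < P\<close> by (simp add: trans_le_add2)
    then show "\<exists>n\<ge>m. s' n = M" using q s'_add by metis
  qed
  ultimately have "limsup_is s' M" unfolding limsup_is_def ..
  then show ?thesis
    using limsup_is_shift[of s a M] unfolding s'_def M_def range by simp
qed

lemma eventually_no_strict_increase:
  fixes \<Phi> :: "nat \<Rightarrow> nat"
  assumes mono: "\<And>n. n0 \<le> n \<Longrightarrow> \<Phi> n \<le> \<Phi> (Suc n)" and bounded: "\<And>n. \<Phi> n \<le> B"
  shows "\<exists>T\<ge>n0. \<forall>n\<ge>T. \<Phi> (Suc n) = \<Phi> n"
proof -
  have mono': "\<Phi> m \<le> \<Phi> n" if "n0 \<le> m" "m \<le> n" for m n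
    using that(2,1) by (induction n rule: dec_induct) (auto intro: order_trans mono)
  have "\<Phi> ` {n0..} \<subseteq> {..B}" using bounded by auto
  then have fin: "finite (\<Phi> ` {n0..})" by (rule finite_subset) simp
  have "Max (\<Phi> ` {n0..}) \<in> \<Phi> ` {n0..}" by (rule Max_in[OF fin]) auto
  then obtain T where T: "n0 \<le> T" "\<Phi> T = Max (\<Phi> ` {n0..})" by auto
  have const: "\<Phi> n = \<Phi> T" if "T \<le> n" for n
    using mono'[of T n] Max_ge[OF fin, of "\<Phi> n"] T that by auto
  have "\<Phi> (Suc n) = \<Phi> n" if "T \<le> n" for n
    using const[of n] const[of "Suc n"] that by linarith
  then show ?thesis using T(1) by blast
qed

section \<open>Eve's strategy\<close>

lemma index_eq_Min_Max: "index I \<Longrightarrow> I = {Min I..Max I}"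
proof -
  assume "index I"
  then obtain a b where "a \<le> b" "I = {a..b}" unfolding index_def by blast
  moreover have "Min {a..b} = a" "Max {a..b} = b" using \<open>a \<le> b\<close> by (auto intro: Min_eqI Max_eqI)
  ultimately show ?thesis by simp
qed

lemma index_finite: "index I \<Longrightarrow> finite I"
  unfolding index_def by auto

lemma index_nonempty: "index I \<Longrightarrow> I \<noteq> {}"
  unfolding index_def by auto

lemma finite_reg_indices: "index J \<Longrightarrow> finite (reg_indices J)"
proof (rule finite_subset[of _ "{..Max J}"])
  assume "index J"
  show "reg_indices J \<subseteq> {..Max J}"
  proof
    fix j assume "j \<in> reg_indices J"
    then have "j = 0 \<or> 2 * j \<in> J" unfolding reg_indices_def by auto
    then show "j \<in> {..Max J}" using Max_ge[OF index_finite[OF \<open>index J\<close>], of "2 * j"] by auto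
  qed
qed simp

lemma div2_in_reg_indices:
  assumes "index J" and "Min J \<in> {1, 2}" and "p \<in> J"
  shows "p div 2 \<in> reg_indices J"
proof (cases "p = 1")
  case True
  then show ?thesis using assms(3) unfolding reg_indices_def by simp
next
  case False
  have J: "J = {Min J..Max J}" using index_eq_Min_Max[OF assms(1)] .
  moreover have "Min J \<le> p" using assms(1,3) by (simp add: index_finite)
  ultimately have "2 \<le> p" using False assms(2) by auto
  moreover have "p \<le> Max J" using assms(1,3) by (simp add: index_finite)
  ultimately have "2 * (p div 2) \<in> {Min J..Max J}" using assms(2) by auto
  then show ?thesis using J unfolding reg_indices_def by simp
qed

text \<open>Eve's strategy: \<open>L\<close> is the priority of the current edge of the guided run and \<open>p\<close> that of
  the guiding run.\<close>

definition eve_register :: "nat set \<Rightarrow> (nat \<Rightarrow> nat) \<Rightarrow> nat \<Rightarrow> nat \<Rightarrow> nat" where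
  "eve_register J r L p = Max (insert (p div 2) {h \<in> reg_indices J. even L \<and> r h < L})"

fun eve_conf :: "nat set \<Rightarrow> nat set \<Rightarrow> nat \<Rightarrow> (nat \<Rightarrow> nat) \<Rightarrow> (nat \<Rightarrow> nat) \<Rightarrow> nat
    \<Rightarrow> (nat \<Rightarrow> nat) \<times> (nat \<times> nat \<Rightarrow> nat)" where
  "eve_conf I J N Ls ps 0 = ((\<lambda>_. Min I), (\<lambda>_. 0))"
| "eve_conf I J N Ls ps (Suc n) =
     (let (r, c) = eve_conf I J N Ls ps n;
          j = eve_register J r (Ls n) (ps n);
          (w, l, c1) = reg_output J N r c j
      in reg_update j (Ls n) r c1)"

lemma eve_conf_cong:
  "(\<And>k. k < n \<Longrightarrow> Ls k = Ls' k \<and> ps k = ps' k) \<Longrightarrow> eve_conf I J N Ls ps n = eve_conf I J N Ls' ps' n"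
  by (induction n) (auto simp: Let_def split_beta)

text \<open>A branch of the guided run: \<open>Ls\<close> and \<open>ps\<close> are the priorities of the guided and the guiding
  run along it, \<open>\<pi>\<close> the pair of their states, and \<open>loop_even\<close> is what the pumping argument
  provides.\<close>

locale guided_branch =
  fixes I J :: "nat set" and N K :: nat and Ls ps :: "nat \<Rightarrow> nat"
    and \<pi> :: "nat \<Rightarrow> 'x" and S :: "'x set"
  assumes index_I: "index I" and index_J: "index J" and Min_J: "Min J \<in> {1, 2}"
    and Ls_in_I: "\<And>n. Ls n \<in> I" and ps_in_J: "\<And>n. ps n \<in> J"
    and ps_parity_acc: "parity_acc ps"
    and finite_S: "finite S" and card_S: "card S \<le> K" and \<pi>_in_S: "\<And>n. \<pi> n \<in> S"
    and N_eq: "N = K + 1"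
    and loop_even: "\<And>a b. a < b \<Longrightarrow> \<pi> a = \<pi> b \<Longrightarrow> (\<forall>n\<in>{a..<b}. ps n \<le> ps a) \<Longrightarrow> even (ps a)
              \<Longrightarrow> even (Max (Ls ` {a..<b}))"
begin

abbreviation R where "R \<equiv> reg_indices J"

definition reg where "reg n = fst (eve_conf I J N Ls ps n)"
definition ctr where "ctr n = snd (eve_conf I J N Ls ps n)"
definition chosen where "chosen n = eve_register J (reg n) (Ls n) (ps n)"
definition ctr_out where "ctr_out n = snd (snd (reg_output J N (reg n) (ctr n) (chosen n)))"
definition out where "out n = fst (reg_output J N (reg n) (ctr n) (chosen n))"
definition pri_max where "pri_max a n = Max (Ls ` {a..<n})"

lemma eve_conf_Suc:
  "eve_conf I J N Ls ps (Suc n) = reg_update (chosen n) (Ls n) (reg n) (ctr_out n)"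
  unfolding chosen_def ctr_out_def reg_def ctr_def by (simp add: split_beta Let_def)

lemma reg_0: "reg 0 = (\<lambda>_. Min I)"
  unfolding reg_def by simp

lemma ctr_0: "ctr 0 = (\<lambda>_. 0)"
  unfolding ctr_def by simp

lemma reg_Suc:
  "reg (Suc n) h =
    (if h = chosen n then Ls n else if chosen n < h then max (Ls n) (reg n h) else reg n h)"
  unfolding reg_def[of "Suc n"] eve_conf_Suc reg_update_def by simp

lemma ctr_Suc: "ctr (Suc n) (i, j) =
   (if (j = chosen n \<and> i < Ls n) \<or> (i = reg n (chosen n) \<and> j < chosen n) then 0
    else ctr_out n (i, j))"
  unfolding ctr_def[of "Suc n"] eve_conf_Suc reg_update_def by simp

lemma chosen_cases: "chosen n \<in> insert (ps n div 2) {h \<in> R. even (Ls n) \<and> reg n h < Ls n}"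
  unfolding chosen_def eve_register_def by (rule Max_in) (simp_all add: finite_reg_indices index_J)

lemma chosen_in_reg_indices: "chosen n \<in> R"
  using chosen_cases[of n] div2_in_reg_indices[OF index_J Min_J ps_in_J[of n]] by auto

lemma div2_le_chosen: "ps n div 2 \<le> chosen n"
  unfolding chosen_def eve_register_def by (rule Max_ge) (simp_all add: finite_reg_indices index_J)

lemma le_chosen: "h \<in> R \<Longrightarrow> even (Ls n) \<Longrightarrow> reg n h < Ls n \<Longrightarrow> h \<le> chosen n"
  unfolding chosen_def eve_register_def by (rule Max_ge) (simp_all add: finite_reg_indices index_J)

lemma reg_in_I: "reg n h \<in> I"
proof (induction n)
  case 0
  then show ?case using reg_0 index_I index_finite index_nonempty by auto
next
  case (Suc n)
  then show ?case using Ls_in_I by (auto simp: reg_Suc max_def)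
qed

lemma ctr_out_other: "(i, j) \<noteq> (reg n (chosen n), chosen n) \<Longrightarrow> ctr_out n (i, j) = ctr n (i, j)"
  unfolding ctr_out_def reg_output_def by auto

lemma ctr_Suc_above: "chosen n < j \<Longrightarrow> ctr (Suc n) (i, j) = ctr n (i, j)"
  using ctr_out_other[of i j n] by (auto simp: ctr_Suc)

lemma ctr_out_increment:
  "chosen n \<noteq> 0 \<Longrightarrow> odd (reg n (chosen n)) \<Longrightarrow> ctr n (reg n (chosen n), chosen n) \<noteq> N \<Longrightarrow>
   ctr_out n (reg n (chosen n), chosen n) = Suc (ctr n (reg n (chosen n), chosen n))"
  unfolding ctr_out_def reg_output_def by auto

lemma ctr_out_reset:
  "chosen n \<noteq> 0 \<Longrightarrow> odd (reg n (chosen n)) \<Longrightarrow> ctr n (reg n (chosen n), chosen n) = N \<Longrightarrow>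
   ctr_out n (reg n (chosen n), chosen n) = 0"
  unfolding ctr_out_def reg_output_def by auto

lemma out_eq: "out n = (if chosen n = 0 then 1 else if even (reg n (chosen n)) then 2 * chosen n
    else if ctr n (reg n (chosen n), chosen n) = N then 2 * chosen n + 1 else 2 * chosen n)"
  unfolding out_def reg_output_def by auto

lemma pri_max_Suc: "a < n \<Longrightarrow> pri_max a (Suc n) = max (pri_max a n) (Ls n)"
  unfolding pri_max_def by (simp add: atLeastLessThanSuc max.commute)

lemma pri_max_singleton: "pri_max n (Suc n) = Ls n"
  unfolding pri_max_def by simp

lemma card_le_if_odd_windows:
  assumes "finite H" and "H \<subseteq> {T0..}" and "\<forall>a\<in>H. ps a = 2 * j" and "\<forall>n\<ge>T0. ps n \<le> 2 * j"
    and odd_windows: "\<forall>a\<in>H. \<forall>b\<in>H. a < b \<longrightarrow> odd (pri_max a b)"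
  shows "card H \<le> K"
proof -
  have no_loop: "\<pi> a \<noteq> \<pi> b" if "a \<in> H" "b \<in> H" "a < b" for a b
  proof
    assume "\<pi> a = \<pi> b"
    moreover have "\<forall>n\<in>{a..<b}. ps n \<le> ps a" and "even (ps a)" using assms(2-4) that by auto
    ultimately have "even (pri_max a b)" unfolding pri_max_def using loop_even \<open>a < b\<close> by blast
    then show False using odd_windows that by blast
  qed
  have "inj_on \<pi> H"
    by (rule inj_onI) (metis linorder_neqE_nat no_loop)
  then have "card H = card (\<pi> ` H)" by (simp add: card_image)
  also have "\<dots> \<le> card S" using finite_S \<pi>_in_S by (intro card_mono) auto
  finally show ?thesis using card_S by simp
qed

text \<open>The witnesses \<open>H\<close> are the steps since \<open>T0\<close> at which the counter \<open>(i, j)\<close> was incremented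
  after its last reset.\<close>

definition counter_witness :: "nat \<Rightarrow> nat \<Rightarrow> nat \<Rightarrow> nat \<Rightarrow> nat set \<Rightarrow> bool" where
  "counter_witness i j T0 n H \<longleftrightarrow> H \<subseteq> {T0..<n} \<and> card H = ctr n (i, j) \<and>
     (\<forall>a\<in>H. ps a = 2 * j \<and> reg n j \<le> pri_max a n \<and> (pri_max a n \<le> i \<or> odd (pri_max a n))) \<and>
     (\<forall>a\<in>H. \<forall>b\<in>H. a < b \<longrightarrow> odd (pri_max a b))"

context
  fixes i j T0 :: nat
  assumes j_in_R: "j \<in> R" and j_pos: "1 \<le> j" and odd_i: "odd i"
    and below_j: "\<And>n. T0 \<le> n \<Longrightarrow> chosen n \<le> j \<and> ps n \<le> 2 * j"
begin

lemma counter_witness_card_le: "counter_witness i j T0 n H \<Longrightarrow> card H \<le> K"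
  unfolding counter_witness_def
  by (rule card_le_if_odd_windows[of H T0 j]) (auto intro: finite_subset simp: below_j)

lemma counter_witness_Suc_below:
  assumes H: "counter_witness i j T0 n H" and below: "chosen n < j"
  shows "counter_witness i j T0 (Suc n) H"
proof -
  have reg_j: "reg (Suc n) j = max (Ls n) (reg n j)" using below by (simp add: reg_Suc)
  have "reg (Suc n) j \<le> pri_max a (Suc n) \<and> (pri_max a (Suc n) \<le> i \<or> odd (pri_max a (Suc n)))"
    if a: "a \<in> H" for a
  proof -
    have a_n: "a < n" and wit: "reg n j \<le> pri_max a n" "pri_max a n \<le> i \<or> odd (pri_max a n)"
      using H a unfolding counter_witness_def by auto
    have Ls_le: "Ls n \<le> reg n j" if "even (Ls n)"
      using le_chosen[OF j_in_R that] below by (meson leD le_less_linear)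
    have "max (pri_max a n) (Ls n) \<le> i \<or> odd (max (pri_max a n) (Ls n))"
    proof (cases "Ls n \<le> i \<or> odd (Ls n)")
      case True
      then show ?thesis using wit(2) by (auto simp: max_def)
    next
      case False
      then have "Ls n \<le> pri_max a n" using Ls_le wit(1) by auto
      then show ?thesis using wit(2) by (simp add: max_absorb1)
    qed
    then show ?thesis
      using wit(1) unfolding pri_max_Suc[OF a_n] reg_j by auto
  qed
  moreover have "ctr (Suc n) (i, j) = ctr n (i, j)" using below by (rule ctr_Suc_above)
  ultimately show ?thesis using H unfolding counter_witness_def by auto
qed

lemma counter_witness_Suc_chosen:
  assumes H: "counter_witness i j T0 n H" and chosen: "chosen n = j" and Ls_le: "Ls n \<le> i"
    and a: "a \<in> H"
  shows "ps a = 2 * j \<and> reg (Suc n) j \<le> pri_max a (Suc n) \<and>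
    (pri_max a (Suc n) \<le> i \<or> odd (pri_max a (Suc n)))"
proof -
  have "a < n" and "ps a = 2 * j" and "pri_max a n \<le> i \<or> odd (pri_max a n)"
    using H a unfolding counter_witness_def by auto
  moreover have "reg (Suc n) j = Ls n" using chosen by (simp add: reg_Suc)
  ultimately show ?thesis using Ls_le by (auto simp: pri_max_Suc max_def)
qed

lemma counter_witness_Suc_increment:
  assumes H: "counter_witness i j T0 n H" and "T0 \<le> n" and chosen: "chosen n = j"
    and Ls_le: "Ls n \<le> i" and reg_j: "reg n j = i"
  shows "counter_witness i j T0 (Suc n) (insert n H)"
proof -
  have H_sub: "H \<subseteq> {T0..<n}" and card_H: "card H = ctr n (i, j)"
    and wit: "\<forall>a\<in>H. reg n j \<le> pri_max a n \<and> (pri_max a n \<le> i \<or> odd (pri_max a n))"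
    and odd_windows: "\<forall>a\<in>H. \<forall>b\<in>H. a < b \<longrightarrow> odd (pri_max a b)"
    using H unfolding counter_witness_def by auto
  have "finite H" using H_sub finite_subset by blast
  have "ctr n (i, j) \<noteq> N" using counter_witness_card_le[OF H] card_H N_eq by simp
  then have ctr_Suc_n: "ctr (Suc n) (i, j) = Suc (card H)"
    using ctr_out_increment[of n] ctr_Suc[of n i j] chosen reg_j Ls_le odd_i j_pos card_H by auto
  have "chosen n = ps n div 2" using chosen_cases[of n] chosen reg_j Ls_le by auto
  then have ps_n: "ps n = 2 * j" using below_j[OF \<open>T0 \<le> n\<close>] chosen by linarith
  have new_odd: "odd (pri_max a n)" if "a \<in> H" for a
    using wit that reg_j odd_i by (metis le_antisym)
  show ?thesis
    unfolding counter_witness_def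
  proof (intro conjI)
    show "insert n H \<subseteq> {T0..<Suc n}" using H_sub \<open>T0 \<le> n\<close> by auto
    have "n \<notin> H" using H_sub by auto
    then show "card (insert n H) = ctr (Suc n) (i, j)" using ctr_Suc_n \<open>finite H\<close> by simp
    show "\<forall>a\<in>insert n H. ps a = 2 * j \<and> reg (Suc n) j \<le> pri_max a (Suc n) \<and>
        (pri_max a (Suc n) \<le> i \<or> odd (pri_max a (Suc n)))"
      using counter_witness_Suc_chosen[OF H chosen Ls_le] ps_n chosen Ls_le
      by (auto simp: reg_Suc pri_max_singleton)
    show "\<forall>a\<in>insert n H. \<forall>b\<in>insert n H. a < b \<longrightarrow> odd (pri_max a b)"
      using odd_windows new_odd H_sub by fastforce
  qed
qed

lemma counter_witness_Suc:
  assumes H: "counter_witness i j T0 n H" and "T0 \<le> n"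
  shows "\<exists>H'. counter_witness i j T0 (Suc n) H'"
proof -
  consider "chosen n < j" | "chosen n = j" "i < Ls n" | "chosen n = j" "Ls n \<le> i" "reg n j = i"
    | "chosen n = j" "Ls n \<le> i" "reg n j \<noteq> i"
    using below_j[OF \<open>T0 \<le> n\<close>] by force
  then show ?thesis
  proof cases
    case 1
    then show ?thesis using counter_witness_Suc_below[OF H] by blast
  next
    case 2
    then have "ctr (Suc n) (i, j) = 0" by (simp add: ctr_Suc)
    then show ?thesis unfolding counter_witness_def by (intro exI[of _ "{}"]) auto
  next
    case 3
    then show ?thesis using counter_witness_Suc_increment[OF H \<open>T0 \<le> n\<close>] by blast
  next
    case 4
    then have "ctr (Suc n) (i, j) = ctr n (i, j)"
      using ctr_out_other[of i j n] by (simp add: ctr_Suc)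
    then show ?thesis using H counter_witness_Suc_chosen[OF H 4(1,2)]
      unfolding counter_witness_def by (intro exI[of _ H]) auto
  qed
qed

lemma counter_le_K:
  assumes "ctr T0 (i, j) = 0" and "T0 \<le> n"
  shows "ctr n (i, j) \<le> K"
proof -
  from \<open>T0 \<le> n\<close> have "\<exists>H. counter_witness i j T0 n H"
  proof (induction n rule: dec_induct)
    case base
    show ?case using assms(1) unfolding counter_witness_def by (intro exI[of _ "{}"]) auto
  next
    case (step n)
    then show ?case using counter_witness_Suc by blast
  qed
  then show ?thesis using counter_witness_card_le unfolding counter_witness_def by metis
qed

end

lemma never_loses: "\<not> fst (snd (reg_output J N (reg n) (ctr n) (chosen n)))"
proof
  assume "fst (snd (reg_output J N (reg n) (ctr n) (chosen n)))"
  then have pos: "chosen n \<noteq> 0" and odd_reg: "odd (reg n (chosen n))"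
    and full: "ctr n (reg n (chosen n), chosen n) = N" and not_in_J: "2 * chosen n + 1 \<notin> J"
    unfolding reg_output_def by (auto split: if_splits)
  have J: "J = {Min J..Max J}" using index_eq_Min_Max[OF index_J] .
  have "2 * chosen n \<in> J" using chosen_in_reg_indices[of n] pos unfolding reg_indices_def by auto
  then have "Min J \<le> 2 * chosen n" using J by auto
  then have Max_J: "Max J \<le> 2 * chosen n" using not_in_J J by auto
  have le_Max_J: "x \<le> Max J" if "x \<in> J" for x using that index_J by (simp add: index_finite)
  have "chosen m \<le> chosen n \<and> ps m \<le> 2 * chosen n" for m
    using chosen_in_reg_indices[of m] le_Max_J[OF ps_in_J[of m]] le_Max_J[of "2 * chosen m"] Max_J
    unfolding reg_indices_def by auto
  then have "ctr n (reg n (chosen n), chosen n) \<le> K"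
    using counter_le_K[OF chosen_in_reg_indices[of n] _ odd_reg, of 0 n] pos ctr_0 by simp
  then show False using full N_eq by simp
qed

text \<open>Above \<open>k\<close>, a register is only chosen when an even priority exceeds its content, and it
  never decreases otherwise; so once the priorities of the guiding run stay below \<open>2 k\<close>, the sum
  of these registers increases with every choice above \<open>k\<close>, which can happen only finitely often.\<close>

lemma eventually_chosen_le:
  assumes "limsup_is ps (2 * k)"
  shows "\<exists>T. \<forall>n\<ge>T. chosen n \<le> k \<and> ps n \<le> 2 * k"
proof -
  obtain n0 where n0: "\<And>n. n0 \<le> n \<Longrightarrow> ps n \<le> 2 * k"
    using assms unfolding limsup_is_def eventually_sequentially by blast
  define Hs where "Hs = {h \<in> R. k < h}"
  have "finite Hs" unfolding Hs_def using finite_reg_indices[OF index_J] by simp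
  define \<Phi> where "\<Phi> n = (\<Sum>h\<in>Hs. reg n h)" for n
  have bumped: "reg n (chosen n) < Ls n" if "n0 \<le> n" "k < chosen n" for n
    using chosen_cases[of n] n0[OF that(1)] that(2) by auto
  have reg_mono: "reg n h \<le> reg (Suc n) h" if "n0 \<le> n" "h \<in> Hs" for n h
    using bumped[OF that(1)] that(2) unfolding Hs_def by (auto simp: reg_Suc)
  have "\<Phi> n \<le> \<Phi> (Suc n)" if "n0 \<le> n" for n
    unfolding \<Phi>_def using reg_mono[OF that] by (rule sum_mono)
  moreover have "\<Phi> n \<le> card Hs * Max I" for n
  proof -
    have "\<Phi> n \<le> (\<Sum>h\<in>Hs. Max I)" unfolding \<Phi>_def
      using reg_in_I index_I index_finite by (intro sum_mono) auto
    then show ?thesis by simp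
  qed
  ultimately obtain T where T: "n0 \<le> T" "\<And>n. T \<le> n \<Longrightarrow> \<Phi> (Suc n) = \<Phi> n"
    using eventually_no_strict_increase by blast
  have "chosen n \<le> k" if "T \<le> n" for n
  proof (rule ccontr)
    assume "\<not> chosen n \<le> k"
    then have "chosen n \<in> Hs" using chosen_in_reg_indices unfolding Hs_def by auto
    moreover have "reg n (chosen n) < reg (Suc n) (chosen n)"
      using bumped \<open>\<not> chosen n \<le> k\<close> T(1) that by (simp add: reg_Suc)
    ultimately have "\<Phi> n < \<Phi> (Suc n)"
      unfolding \<Phi>_def using reg_mono T(1) that \<open>finite Hs\<close>
      by (intro sum_strict_mono_ex1) auto
    then show False using T(2)[OF that] by simp
  qed
  then show ?thesis using n0 T(1) order_trans by blast
qed

lemma finite_overflows: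
  assumes "k \<in> R" and "1 \<le> k" and below: "\<And>n. T \<le> n \<Longrightarrow> chosen n \<le> k \<and> ps n \<le> 2 * k"
  shows "finite {n. T \<le> n \<and> out n = 2 * k + 1}"
proof -
  define overflow where
    "overflow i n \<longleftrightarrow> T \<le> n \<and> chosen n = k \<and> reg n k = i \<and> odd i \<and> ctr n (i, k) = N" for i n
  have no_second: "\<not> overflow i n2" if "overflow i n1" "n1 < n2" for i n1 n2
  proof
    assume "overflow i n2"
    have "ctr (Suc n1) (i, k) = 0"
      using ctr_out_reset[of n1] ctr_Suc[of n1 i k] that(1) \<open>1 \<le> k\<close> unfolding overflow_def by auto
    moreover have "\<And>n. Suc n1 \<le> n \<Longrightarrow> chosen n \<le> k \<and> ps n \<le> 2 * k"
      using below that(1) unfolding overflow_def by simp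
    moreover have "odd i" and "Suc n1 \<le> n2" using that unfolding overflow_def by auto
    ultimately have "ctr n2 (i, k) \<le> K" using counter_le_K[OF assms(1,2)] by blast
    then show False using \<open>overflow i n2\<close> N_eq unfolding overflow_def by simp
  qed
  have finite_overflow: "finite {n. overflow i n}" for i
  proof (cases "\<exists>n1. overflow i n1")
    case True
    then obtain n1 where "overflow i n1" by blast
    have "n \<le> n1" if "overflow i n" for n
      using no_second[OF \<open>overflow i n1\<close>, of n] that by (meson not_le)
    then have "{n. overflow i n} \<subseteq> {..n1}" by blast
    then show ?thesis by (rule finite_subset) simp
  qed simp
  have "{n. T \<le> n \<and> out n = 2 * k + 1} \<subseteq> (\<Union>i\<in>I. {n. overflow i n})"
  proof
    fix n assume n: "n \<in> {n. T \<le> n \<and> out n = 2 * k + 1}"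
    then have "chosen n \<le> k" using below by simp
    then have "overflow (reg n k) n" using n \<open>1 \<le> k\<close> unfolding out_eq overflow_def
      by (auto split: if_splits; presburger)
    then show "n \<in> (\<Union>i\<in>I. {n. overflow i n})" using reg_in_I by auto
  qed
  moreover have "finite (\<Union>i\<in>I. {n. overflow i n})"
    using index_finite[OF index_I] finite_overflow by simp
  ultimately show ?thesis by (rule finite_subset)
qed

lemma out_parity_acc: "parity_acc out"
proof -
  have "ps n \<le> Max J" for n using ps_in_J index_J by (simp add: index_finite)
  then obtain M where M: "limsup_is ps M" using limsup_is_exists by blast
  then have "even M" using parity_acc_iff_even ps_parity_acc by simp
  obtain m where "ps m = M" using M unfolding limsup_is_def using frequently_ex by blast
  then have "M \<in> J" using ps_in_J by metis
  then have "1 \<le> M" using Min_J Min_le[OF index_finite[OF index_J]] by fastforce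
  then obtain k where k: "M = 2 * k" "1 \<le> k" using \<open>even M\<close> by (auto elim!: evenE)
  then have "k \<in> R" using \<open>M \<in> J\<close> unfolding reg_indices_def by simp
  obtain T where T: "\<And>n. T \<le> n \<Longrightarrow> chosen n \<le> k \<and> ps n \<le> 2 * k"
    using eventually_chosen_le M k(1) by blast
  obtain T' where "{n. T \<le> n \<and> out n = 2 * k + 1} \<subseteq> {..<T'}"
    using finite_overflows[OF \<open>k \<in> R\<close> k(2) T] finite_nat_bounded by blast
  then have no_overflow: "out n \<noteq> 2 * k + 1" if "max T T' \<le> n" for n
    using that by fastforce
  have "\<forall>\<^sub>F n in sequentially. out n \<le> 2 * k"
  proof (rule eventually_sequentiallyI[of "max T T'"])
    fix n assume "max T T' \<le> n"
    then show "out n \<le> 2 * k"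
      using T[of n] no_overflow[of n] unfolding out_eq by (auto split: if_splits)
  qed
  moreover have "\<exists>\<^sub>F n in sequentially. out n = 2 * k"
  proof -
    have "\<exists>\<^sub>F n in sequentially. max T T' \<le> n \<and> ps n = M"
      using frequently_eventually_conj[OF _ eventually_ge_at_top[of "max T T'"]] M
      unfolding limsup_is_def by blast
    then show ?thesis
    proof (rule frequently_elim1)
      fix n assume n: "max T T' \<le> n \<and> ps n = M"
      then have "chosen n = k" using T[of n] div2_le_chosen[of n] k(1) by fastforce
      then show "out n = 2 * k"
        using n no_overflow[of n] k(2) unfolding out_eq by (auto split: if_splits)
    qed
  qed
  ultimately have "limsup_is out (2 * k)" unfolding limsup_is_def ..
  then show ?thesis using parity_acc_iff_even by simp
qed

end

section \<open>Folding a tree at a loop\<close>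

fun fold_loop_rev :: "bool list \<Rightarrow> bool list \<Rightarrow> bool list \<Rightarrow> bool list" where
  "fold_loop_rev u v [] = []"
| "fold_loop_rev u v (d # rx) = (let y = fold_loop_rev u v rx @ [d] in if y = v then u else y)"

definition fold_loop :: "bool list \<Rightarrow> bool list \<Rightarrow> bool list \<Rightarrow> bool list" where
  "fold_loop u v x = fold_loop_rev u v (rev x)"

lemma fold_loop_Nil [simp]: "fold_loop u v [] = []"
  unfolding fold_loop_def by simp

lemma fold_loop_snoc:
  "fold_loop u v (x @ [d]) = (if fold_loop u v x @ [d] = v then u else fold_loop u v x @ [d])"
  unfolding fold_loop_def by (simp add: Let_def)

lemma fold_loop_avoiding: "take (length v) x \<noteq> v \<Longrightarrow> fold_loop u v x = x"
proof (induction x rule: rev_induct)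
  case (snoc d x)
  have "take (length v) x \<noteq> v"
  proof (cases "length v \<le> length x")
    case True
    then show ?thesis using snoc.prems by simp
  next
    case False
    then show ?thesis by auto
  qed
  moreover have "x @ [d] \<noteq> v" using snoc.prems by auto
  ultimately show ?case using snoc.IH by (simp add: fold_loop_snoc)
qed simp

definition branch_labels :: "(bool list \<Rightarrow> bool \<Rightarrow> 'b) \<Rightarrow> (nat \<Rightarrow> bool) \<Rightarrow> nat \<Rightarrow> 'b" where
  "branch_labels Q \<beta> n = Q (map \<beta> [0..<n]) (\<beta> n)"

definition lasso :: "(nat \<Rightarrow> bool) \<Rightarrow> nat \<Rightarrow> nat \<Rightarrow> nat \<Rightarrow> bool" where
  "lasso \<beta> a b i = (if i < a then \<beta> i else \<beta> (a + (i - a) mod (b - a)))"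

definition skip_loop :: "nat \<Rightarrow> nat \<Rightarrow> (nat \<Rightarrow> bool) \<Rightarrow> nat \<Rightarrow> bool" where
  "skip_loop a b \<gamma> i = (if i < a then \<gamma> i else \<gamma> (i + (b - a)))"

context
  fixes \<beta> :: "nat \<Rightarrow> bool" and a b :: nat
  assumes a_less_b: "a < b"
begin

abbreviation fold_at_loop :: "bool list \<Rightarrow> bool list" where
  "fold_at_loop \<equiv> fold_loop (map \<beta> [0..<a]) (map \<beta> [0..<b])"

lemma lasso_less: "i < b \<Longrightarrow> lasso \<beta> a b i = \<beta> i"
  unfolding lasso_def by auto

lemma skip_loop_lasso: "skip_loop a b (lasso \<beta> a b) = lasso \<beta> a b"
proof
  fix i
  have "(i + (b - a) - a) mod (b - a) = (i - a) mod (b - a)" if "a \<le> i"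
    using that by (metis Nat.add_diff_assoc2 mod_add_self2)
  then show "skip_loop a b (lasso \<beta> a b) i = lasso \<beta> a b i"
    unfolding skip_loop_def lasso_def by auto
qed

lemma fold_at_loop_skip:
  assumes "map \<gamma> [0..<b] = map \<beta> [0..<b]" and "b \<le> n"
  shows "fold_at_loop (map \<gamma> [0..<n]) = fold_at_loop (map (skip_loop a b \<gamma>) [0..<n - (b - a)])"
  using assms(2)
proof (induction n rule: dec_induct)
  case base
  have fold_b: "fold_at_loop (map \<gamma> [0..<b]) = map \<beta> [0..<a]"
  proof -
    obtain b' where b: "b = Suc b'" using a_less_b by (cases b) auto
    have avoid: "fold_at_loop (map \<beta> [0..<b']) = map \<beta> [0..<b']"
      by (rule fold_loop_avoiding) (simp add: b)
    have \<gamma>_b: "map \<gamma> [0..<b] = map \<beta> [0..<b'] @ [\<beta> b']" using assms(1) b by simp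
    show ?thesis unfolding \<gamma>_b fold_loop_snoc avoid by (simp add: b)
  qed
  have skip_a: "map (skip_loop a b \<gamma>) [0..<a] = map \<beta> [0..<a]"
    using assms(1) a_less_b unfolding skip_loop_def by (auto simp: map_eq_conv)
  have fold_a: "fold_at_loop (map \<beta> [0..<a]) = map \<beta> [0..<a]"
    by (rule fold_loop_avoiding) (use a_less_b in \<open>auto dest: arg_cong[of _ _ length]\<close>)
  have "b - (b - a) = a" using a_less_b by simp
  then show ?case using fold_b skip_a fold_a by (simp only:)
next
  case (step n)
  have "Suc n - (b - a) = Suc (n - (b - a))" and "skip_loop a b \<gamma> (n - (b - a)) = \<gamma> n"
    using step.hyps a_less_b unfolding skip_loop_def by auto
  then show ?case using step.IH by (simp add: fold_loop_snoc)
qed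

lemma branch_labels_fold_skip:
  assumes "map \<gamma> [0..<b] = map \<beta> [0..<b]" and "b \<le> n"
  shows "branch_labels (\<lambda>x. Q (fold_at_loop x)) \<gamma> n
    = branch_labels (\<lambda>x. Q (fold_at_loop x)) (skip_loop a b \<gamma>) (n - (b - a))"
proof -
  have "skip_loop a b \<gamma> (n - (b - a)) = \<gamma> n" using assms(2) a_less_b unfolding skip_loop_def by auto
  then show ?thesis unfolding branch_labels_def fold_at_loop_skip[OF assms] by simp
qed

lemma branch_labels_fold_short:
  assumes "n < b"
  shows "branch_labels (\<lambda>x. Q (fold_at_loop x)) (lasso \<beta> a b) n = branch_labels Q \<beta> n"
proof -
  have lasso_n: "map (lasso \<beta> a b) [0..<n] = map \<beta> [0..<n]" using assms lasso_less by simp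
  have "fold_at_loop (map \<beta> [0..<n]) = map \<beta> [0..<n]"
    by (rule fold_loop_avoiding) (use assms in \<open>auto dest: arg_cong[of _ _ length]\<close>)
  then show ?thesis unfolding branch_labels_def lasso_n lasso_less[OF assms] by (rule arg_cong)
qed

lemma limsup_is_fold_lasso:
  "limsup_is (branch_labels (\<lambda>x. Q (fold_at_loop x)) (lasso \<beta> a b))
    (Max (branch_labels Q \<beta> ` {a..<b}))"
proof -
  let ?s = "branch_labels (\<lambda>x. Q (fold_at_loop x)) (lasso \<beta> a b)"
  have lasso_b: "map (lasso \<beta> a b) [0..<b] = map \<beta> [0..<b]" using lasso_less by simp
  have "?s (n + (b - a)) = ?s n" if "a \<le> n" for n
    using branch_labels_fold_skip[OF lasso_b, of "n + (b - a)" Q] that a_less_b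
    by (simp add: skip_loop_lasso)
  then have "limsup_is ?s (Max (?s ` {a..<a + (b - a)}))"
    using a_less_b by (intro limsup_is_periodic) auto
  moreover have "?s ` {a..<b} = branch_labels Q \<beta> ` {a..<b}"
    using branch_labels_fold_short by (intro image_cong) auto
  ultimately show ?thesis using a_less_b by simp
qed

text \<open>A branch that leaves the lasso either never enters the loop, and then the folding does
  not affect it, or it agrees up to a shift with a branch that leaves the lasso earlier.\<close>

lemma parity_acc_fold_leaving_lasso:
  assumes acc: "\<And>\<gamma>. parity_acc (branch_labels Q \<gamma>)" and bounded: "\<And>x d. Q x d \<le> B"
    and leaves: "\<gamma> i \<noteq> lasso \<beta> a b i"
  shows "parity_acc (branch_labels (\<lambda>x. Q (fold_at_loop x)) \<gamma>)"
  using leaves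
proof (induction i arbitrary: \<gamma> rule: less_induct)
  case (less i)
  let ?s = "branch_labels (\<lambda>x. Q (fold_at_loop x))"
  show ?case
  proof (cases "map \<gamma> [0..<b] = map \<beta> [0..<b]")
    case False
    have "take (length (map \<beta> [0..<b])) (map \<gamma> [0..<n]) \<noteq> map \<beta> [0..<b]" for n
      using False by (cases "b \<le> n") (auto simp: take_map min_def dest: arg_cong[of _ _ length])
    then have "?s \<gamma> = branch_labels Q \<gamma>"
      unfolding branch_labels_def by (simp add: fold_loop_avoiding)
    then show ?thesis using acc by simp
  next
    case True
    have "b \<le> i"
    proof (rule ccontr)
      assume "\<not> b \<le> i"
      then have "\<gamma> i = \<beta> i" using True by (simp add: map_eq_conv)
      then show False using less.prems lasso_less \<open>\<not> b \<le> i\<close> by simp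
    qed
    have skip_i: "skip_loop a b \<delta> (i - (b - a)) = \<delta> i" for \<delta>
      using \<open>b \<le> i\<close> a_less_b unfolding skip_loop_def by auto
    have "skip_loop a b \<gamma> (i - (b - a)) \<noteq> lasso \<beta> a b (i - (b - a))"
      using less.prems skip_i[of "lasso \<beta> a b"] skip_i[of \<gamma>] by (simp add: skip_loop_lasso)
    then have "parity_acc (?s (skip_loop a b \<gamma>))"
      using less.IH[of "i - (b - a)"] \<open>b \<le> i\<close> a_less_b by simp
    moreover have "\<forall>\<^sub>F n in sequentially. ?s \<gamma> (n + (b - a)) = ?s (skip_loop a b \<gamma>) n"
      using eventually_ge_at_top[of b]
      by (rule eventually_mono) (simp add: branch_labels_fold_skip[OF True])
    moreover have "?s (skip_loop a b \<gamma>) n \<le> B" for n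
      unfolding branch_labels_def by (rule bounded)
    ultimately show ?thesis using parity_acc_eventually_shift by blast
  qed
qed

lemma parity_acc_fold_loop:
  assumes acc: "\<And>\<gamma>. parity_acc (branch_labels Q \<gamma>)" and bounded: "\<And>x d. Q x d \<le> B"
    and loop_max: "\<And>n. n \<in> {a..<b} \<Longrightarrow> branch_labels Q \<beta> n \<le> branch_labels Q \<beta> a"
    and loop_even: "even (branch_labels Q \<beta> a)"
  shows "parity_acc (branch_labels (\<lambda>x. Q (fold_at_loop x)) \<gamma>)"
proof (cases "\<gamma> = lasso \<beta> a b")
  case True
  have "Max (branch_labels Q \<beta> ` {a..<b}) = branch_labels Q \<beta> a"
    using loop_max a_less_b by (intro Max_eqI) auto
  then show ?thesis using limsup_is_fold_lasso parity_acc_iff_even loop_even True by metis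
next
  case False
  then obtain i where "\<gamma> i \<noteq> lasso \<beta> a b i" by blast
  then show ?thesis using parity_acc_fold_leaving_lasso[OF acc bounded] by blast
qed

end

section \<open>Pumping guided runs\<close>

lemma accepting_run_branch_labels:
  "accepting_run A t \<rho> \<longleftrightarrow> is_run A t \<rho> \<and> (\<forall>\<beta>. parity_acc (branch_labels (\<lambda>x. edge_pri A (\<rho> x)) \<beta>))"
  unfolding accepting_run_def branch_labels_def ..

lemma edge_pri_in_index: "is_aut \<Sigma> I A \<Longrightarrow> \<tau> \<in> delta A \<Longrightarrow> edge_pri A \<tau> d \<in> I"
  unfolding is_aut_def edge_pri_def by auto

lemma is_run_fold_loop:
  assumes run: "is_run B t \<rho>" and same_state: "fst (\<rho> u) = fst (\<rho> v)"
  shows "is_run B (\<lambda>x. t (fold_loop u v x)) (\<lambda>x. \<rho> (fold_loop u v x))"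
  unfolding is_run_def
proof (intro conjI allI)
  fix x d
  have "fst (\<rho> (fold_loop u v x @ [d])) = child_state d (\<rho> (fold_loop u v x))"
    using run unfolding is_run_def by simp
  then show "fst (\<rho> (fold_loop u v (x @ [d]))) = child_state d (\<rho> (fold_loop u v x))"
    using same_state by (auto simp: fold_loop_snoc)
qed (use run in \<open>simp_all add: is_run_def\<close>)

definition guided_state :: "'a aut \<Rightarrow> (nat \<Rightarrow> 'a trans \<Rightarrow> 'a trans) \<Rightarrow> (bool list \<Rightarrow> 'a trans)
    \<Rightarrow> bool list \<Rightarrow> nat" where
  "guided_state A g \<rho> x = guided_state_rev g (init A) \<rho> (rev x)"

lemma guided_state_Nil: "guided_state A g \<rho> [] = init A"
  unfolding guided_state_def by simp

lemma guided_state_snoc: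
  "guided_state A g \<rho> (x @ [d]) = child_state d (g (guided_state A g \<rho> x) (\<rho> x))"
  unfolding guided_state_def by simp

lemma guided_run_eq: "guided_run A g \<rho> x = g (guided_state A g \<rho> x) (\<rho> x)"
  unfolding guided_run_def guided_state_def ..

lemma guided_state_in_states:
  assumes "is_aut \<Sigma> I A" and "is_guiding_fn A B g" and "\<And>x. \<rho> x \<in> delta B"
  shows "guided_state A g \<rho> x \<in> states A"
proof (induction x rule: rev_induct)
  case Nil
  then show ?case using assms(1) unfolding is_aut_def guided_state_Nil by simp
next
  case (snoc d x)
  then have "g (guided_state A g \<rho> x) (\<rho> x) \<in> states A \<times> \<Sigma> \<times> states A \<times> states A"
    using assms unfolding is_guiding_fn_def is_aut_def by blast
  then show ?case unfolding guided_state_snoc child_state_def by auto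
qed

lemma guided_run_in_delta:
  assumes "is_aut \<Sigma> I A" and "is_guiding_fn A B g" and "\<And>x. \<rho> x \<in> delta B"
  shows "guided_run A g \<rho> x \<in> delta A"
proof -
  have "guided_state A g \<rho> x \<in> states A" by (rule guided_state_in_states[OF assms])
  then show ?thesis using assms(2,3) unfolding is_guiding_fn_def guided_run_eq by blast
qed

lemma guided_run_fold_loop:
  assumes same_state: "guided_state A g \<rho> u = guided_state A g \<rho> v"
  shows "guided_run A g (\<lambda>x. \<rho> (fold_loop u v x)) x = guided_run A g \<rho> (fold_loop u v x)"
proof -
  have "guided_state A g (\<lambda>x. \<rho> (fold_loop u v x)) x = guided_state A g \<rho> (fold_loop u v x)"
  proof (induction x rule: rev_induct)
    case Nil
    then show ?case by (simp add: guided_state_Nil)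
  next
    case (snoc d x)
    then have "guided_state A g (\<lambda>x. \<rho> (fold_loop u v x)) (x @ [d])
        = guided_state A g \<rho> (fold_loop u v x @ [d])"
      by (simp add: guided_state_snoc)
    also have "\<dots> = guided_state A g \<rho> (fold_loop u v (x @ [d]))"
      using same_state by (simp add: fold_loop_snoc)
    finally show ?case .
  qed
  then show ?thesis unfolding guided_run_eq by simp
qed

lemma guided_loop_even:
  assumes "is_aut \<Sigma> J B" and "preserves_acc \<Sigma> A B g" and "is_tree \<Sigma> t"
    and acc: "accepting_run B t \<rho>" and "a < b"
    and same_A: "guided_state A g \<rho> (map \<beta> [0..<a]) = guided_state A g \<rho> (map \<beta> [0..<b])"
    and same_B: "fst (\<rho> (map \<beta> [0..<a])) = fst (\<rho> (map \<beta> [0..<b]))"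
    and loop_max: "\<And>n. n \<in> {a..<b} \<Longrightarrow>
      branch_labels (\<lambda>x. edge_pri B (\<rho> x)) \<beta> n \<le> branch_labels (\<lambda>x. edge_pri B (\<rho> x)) \<beta> a"
    and loop_even: "even (branch_labels (\<lambda>x. edge_pri B (\<rho> x)) \<beta> a)"
  shows "even (Max (branch_labels (\<lambda>x. edge_pri A (guided_run A g \<rho> x)) \<beta> ` {a..<b}))"
proof -
  let ?f = "fold_loop (map \<beta> [0..<a]) (map \<beta> [0..<b])"
  have run: "is_run B t \<rho>" using acc unfolding accepting_run_def by simp
  have "edge_pri B (\<rho> x) d \<in> J" for x d
    using edge_pri_in_index[OF assms(1)] run unfolding is_run_def by blast
  moreover have "finite J" using assms(1) index_finite unfolding is_aut_def by blast
  ultimately have bounded: "edge_pri B (\<rho> x) d \<le> Max J" for x d by simp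
  have "parity_acc (branch_labels (\<lambda>x. edge_pri B (\<rho> (?f x))) \<gamma>)" for \<gamma>
    using parity_acc_fold_loop[OF \<open>a < b\<close> _ bounded loop_max loop_even] acc
    unfolding accepting_run_branch_labels by blast
  then have "accepting_run B (\<lambda>x. t (?f x)) (\<lambda>x. \<rho> (?f x))"
    using is_run_fold_loop[OF run same_B] unfolding accepting_run_branch_labels by blast
  moreover have "is_tree \<Sigma> (\<lambda>x. t (?f x))" using assms(3) unfolding is_tree_def by simp
  ultimately have "accepting_run A (\<lambda>x. t (?f x)) (guided_run A g (\<lambda>x. \<rho> (?f x)))"
    using assms(2) unfolding preserves_acc_def by blast
  then have "parity_acc (branch_labels (\<lambda>x. edge_pri A (guided_run A g \<rho> (?f x))) (lasso \<beta> a b))"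
    unfolding accepting_run_branch_labels guided_run_fold_loop[OF same_A] by blast
  then show ?thesis using limsup_is_fold_lasso[OF \<open>a < b\<close>] parity_acc_iff_even by blast
qed

section \<open>Eve wins on the guided run\<close>

lemma run_graph_play:
  assumes "is_play (fst (run_graph A \<rho>)) (snd (run_graph A \<rho>)) e"
  defines "\<beta> \<equiv> \<lambda>n. last (snd (snd (e n)))"
  shows "e n = (map \<beta> [0..<n], branch_labels (\<lambda>x. edge_pri A (\<rho> x)) \<beta> n, map \<beta> [0..<Suc n])"
proof -
  have edge: "e m = (fst (e m), edge_pri A (\<rho> (fst (e m))) (\<beta> m), fst (e m) @ [\<beta> m])" for m
  proof -
    have "e m \<in> fst (run_graph A \<rho>)" using assms(1) unfolding is_play_def by simp
    then obtain u d where "e m = (u, edge_pri A (\<rho> u) d, u @ [d])"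
      unfolding run_graph_def by auto
    then show ?thesis unfolding \<beta>_def by simp
  qed
  have "fst (e m) = map \<beta> [0..<m]" for m
  proof (induction m)
    case 0
    then show ?case using assms(1) unfolding is_play_def run_graph_def by simp
  next
    case (Suc m)
    have "fst (e (Suc m)) = snd (snd (e m))" using assms(1) unfolding is_play_def by simp
    also have "\<dots> = fst (e m) @ [\<beta> m]" by (subst edge) simp
    finally show ?case using Suc by simp
  qed
  then show ?thesis using edge[of n] unfolding branch_labels_def by simp
qed

definition eve_strategy :: "nat set \<Rightarrow> nat set \<Rightarrow> nat \<Rightarrow> (bool list \<Rightarrow> bool \<Rightarrow> nat)
    \<Rightarrow> (bool list \<times> nat \<times> bool list) list \<Rightarrow> nat \<times> nat" where
  "eve_strategy I J N LB hist =
     (let n = length hist - 1;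
          Ls = (\<lambda>k. fst (snd (hist ! k)));
          ps = (\<lambda>k. LB (fst (hist ! k)) (last (snd (snd (hist ! k)))))
      in (eve_register J (fst (eve_conf I J N Ls ps n)) (Ls n) (ps n), Ls n))"

lemma eve_strategy_on_branch:
  assumes e: "\<And>k. k \<le> n \<Longrightarrow> e k = (map \<beta> [0..<k], Ls k, map \<beta> [0..<Suc k])"
  shows "eve_strategy I J N LB (map e [0..<Suc n])
    = (eve_register J (fst (eve_conf I J N Ls (branch_labels LB \<beta>) n)) (Ls n) (branch_labels LB \<beta> n),
       Ls n)"
proof -
  have hist: "map e [0..<Suc n] ! k = e k" if "k \<le> n" for k
    using that by (subst nth_map_upt) auto
  have hist_Ls: "fst (snd (map e [0..<Suc n] ! k)) = Ls k"
    and hist_ps: "LB (fst (map e [0..<Suc n] ! k)) (last (snd (snd (map e [0..<Suc n] ! k))))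
      = branch_labels LB \<beta> k" if "k \<le> n" for k
    unfolding hist[OF that] e[OF that] branch_labels_def by simp_all
  then have "eve_conf I J N (\<lambda>k. fst (snd (map e [0..<Suc n] ! k)))
      (\<lambda>k. LB (fst (map e [0..<Suc n] ! k)) (last (snd (snd (map e [0..<Suc n] ! k))))) n
    = eve_conf I J N Ls (branch_labels LB \<beta>) n"
    by (intro eve_conf_cong) simp
  then show ?thesis unfolding eve_strategy_def Let_def using hist_Ls[of n] hist_ps[of n] by simp
qed

lemma eve_wins_reg_run_graph:
  fixes LB :: "bool list \<Rightarrow> bool \<Rightarrow> nat" and \<pi> :: "(nat \<Rightarrow> bool) \<Rightarrow> nat \<Rightarrow> 'x"
  assumes branch: "\<And>\<beta>. guided_branch I J N K (branch_labels (\<lambda>x. edge_pri A (\<rho> x)) \<beta>)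
      (branch_labels LB \<beta>) (\<pi> \<beta>) S"
  shows "eve_wins_reg I J N (run_graph A \<rho>)"
  unfolding eve_wins_reg_def
proof (intro exI[of _ "eve_strategy I J N LB"] allI impI)
  fix e assume play: "is_play (fst (run_graph A \<rho>)) (snd (run_graph A \<rho>)) e"
  define \<beta> where "\<beta> n = last (snd (snd (e n)))" for n
  define Ls where "Ls = branch_labels (\<lambda>x. edge_pri A (\<rho> x)) \<beta>"
  have e: "e n = (map \<beta> [0..<n], Ls n, map \<beta> [0..<Suc n])" for n
    using run_graph_play[OF play] unfolding Ls_def \<beta>_def by blast
  interpret guided_branch I J N K Ls "branch_labels LB \<beta>" "\<pi> \<beta>" S
    unfolding Ls_def by (rule branch)
  define ch where "ch n = eve_strategy I J N LB (map e [0..<Suc n])" for n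
  have ch: "ch n = (chosen n, Ls n)" for n
    unfolding ch_def eve_strategy_on_branch[OF e] chosen_def reg_def ..
  have "reg_conf I J N e ch n = eve_conf I J N Ls (branch_labels LB \<beta>) n" for n
    by (induction n)
      (simp_all add: ch e chosen_def reg_def ctr_def chosen_prio_def Let_def split_beta)
  then have out:
    "reg_out I J N e ch n = (out n, fst (snd (reg_output J N (reg n) (ctr n) (chosen n))))" for n
    unfolding reg_out_def out_def reg_def ctr_def ch by (simp add: split_beta Let_def)
  show "let ch = \<lambda>n. eve_strategy I J N LB (map e [0..<Suc n])
        in (\<forall>n. legal_choice I J (fst (snd (e n))) (ch n) \<and> \<not> snd (reg_out I J N e ch n)) \<and>
           parity_acc (\<lambda>n. fst (reg_out I J N e ch n))"
    unfolding Let_def ch_def[symmetric]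
    using chosen_in_reg_indices Ls_in_I never_loses out_parity_acc
    by (simp add: out ch e legal_choice_def)
qed

lemma guided_branch_guided_run:
  assumes A: "is_aut \<Sigma> I A" and B: "is_aut \<Sigma> J B" and Min_J: "Min J \<in> {1, 2}"
    and g: "is_guiding_fn A B g" and pres: "preserves_acc \<Sigma> A B g"
    and tree: "is_tree \<Sigma> t" and acc: "accepting_run B t \<rho>"
  shows "guided_branch I J (card (states A) * card (states B) + 1)
    (card (states A) * card (states B))
    (branch_labels (\<lambda>x. edge_pri A (guided_run A g \<rho> x)) \<beta>) (branch_labels (\<lambda>x. edge_pri B (\<rho> x)) \<beta>)
    (\<lambda>n. (guided_state A g \<rho> (map \<beta> [0..<n]), fst (\<rho> (map \<beta> [0..<n])))) (states A \<times> states B)"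
proof
  have delta_B: "\<rho> x \<in> delta B" for x using acc unfolding accepting_run_def is_run_def by simp
  show "index I" using A unfolding is_aut_def by simp
  show "index J" using B unfolding is_aut_def by simp
  show "Min J \<in> {1, 2}" by (fact Min_J)
  show "branch_labels (\<lambda>x. edge_pri A (guided_run A g \<rho> x)) \<beta> n \<in> I" for n
    unfolding branch_labels_def
    by (rule edge_pri_in_index[OF A guided_run_in_delta[OF A g delta_B]])
  show "branch_labels (\<lambda>x. edge_pri B (\<rho> x)) \<beta> n \<in> J" for n
    unfolding branch_labels_def by (rule edge_pri_in_index[OF B delta_B])
  show "parity_acc (branch_labels (\<lambda>x. edge_pri B (\<rho> x)) \<beta>)"
    using acc unfolding accepting_run_branch_labels by simp
  show "finite (states A \<times> states B)" using A B unfolding is_aut_def by simp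
  show "(guided_state A g \<rho> (map \<beta> [0..<n]), fst (\<rho> (map \<beta> [0..<n]))) \<in> states A \<times> states B" for n
  proof -
    have "\<rho> (map \<beta> [0..<n]) \<in> states B \<times> \<Sigma> \<times> states B \<times> states B"
      using delta_B B unfolding is_aut_def by blast
    then show ?thesis using guided_state_in_states[OF A g delta_B] by auto
  qed
  show "even (Max (branch_labels (\<lambda>x. edge_pri A (guided_run A g \<rho> x)) \<beta> ` {a..<b}))"
    if "a < b"
      and "(guided_state A g \<rho> (map \<beta> [0..<a]), fst (\<rho> (map \<beta> [0..<a])))
        = (guided_state A g \<rho> (map \<beta> [0..<b]), fst (\<rho> (map \<beta> [0..<b])))"
      and "\<forall>n\<in>{a..<b}. branch_labels (\<lambda>x. edge_pri B (\<rho> x)) \<beta> n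
        \<le> branch_labels (\<lambda>x. edge_pri B (\<rho> x)) \<beta> a"
      and "even (branch_labels (\<lambda>x. edge_pri B (\<rho> x)) \<beta> a)" for a b
    using guided_loop_even[OF B pres tree acc that(1)] that(2-4) by simp
qed (simp_all add: card_cartesian_product)

theorem lemma3:
  fixes \<Sigma> :: "'a set" and A B :: "'a aut" and I J :: "nat set"
    and g :: "nat \<Rightarrow> 'a trans \<Rightarrow> 'a trans"
    and t :: "bool list \<Rightarrow> 'a" and \<rho>B :: "bool list \<Rightarrow> 'a trans"
  assumes "finite \<Sigma>"
    and "is_aut \<Sigma> I A" and "guidable \<Sigma> A"
    and "index J" and "Min J \<in> {1, 2}"
    and "is_aut \<Sigma> J B" and "lang \<Sigma> B = lang \<Sigma> A"
    and "is_guiding_fn A B g" and "preserves_acc \<Sigma> A B g"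
    and "t \<in> lang \<Sigma> A" and "accepting_run B t \<rho>B"
  shows "eve_wins_reg I J (card (states A) * card (states B) + 1)
           (run_graph A (guided_run A g \<rho>B))"
proof -
  have tree: "is_tree \<Sigma> t" using assms(10) unfolding lang_def by simp
  show ?thesis
    by (rule eve_wins_reg_run_graph
        [OF guided_branch_guided_run[OF assms(2,6,5,8,9) tree assms(11)]])
qed

end
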